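(* Let $s\ge1$ and let $F$ be a distribution function on $\mathbb{R}^s$ with $\int_{\mathbb{R}^s}|x|^2dF(x)<\infty$. For $n\ge1$ let $V_n$ be the covariance matrix of the Pitman estimator of $\theta\in\mathbb{R}^s$ from a sample of size $n$ from $F(x-\theta)$. Then for all $n\ge1$, $$nV_n\ \ge\ (n+1)V_{n+1},$$ i.e. $nV_n-(n+1)V_{n+1}$ is nonnegative definite.
   Context: A sample of size $n$ from $F(x-\theta)$ is $x_1,\ldots,x_n$ i.i.d. in $\mathbb{R}^s$ with $x_i-\theta\sim F$. An estimator $t$ is equivariant if $t(x_1+c,\ldots,x_n+c)=t(x_1,\ldots,x_n)+c$ for all $c\in\mathbb{R}^s$. The Pitman estimator is the equivariant estimator whose covariance matrix is minimal in the Loewner order (nonnegative definite difference) among equivariant estimators; it equals $\bar x-E_0(\bar x\mid x_1-\bar x,\ldots,x_n-\bar x)$, with $E_0$ expectation under $\theta=0$. *)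

theory Defs
  imports "HOL-Probability.Probability"
begin

definition sample_meas :: "(real^'s) measure \<Rightarrow> real^'s \<Rightarrow> nat \<Rightarrow> (nat \<Rightarrow> real^'s) measure" where
  "sample_meas F \<theta> n = PiM {..<n} (\<lambda>_. distr F borel (\<lambda>x. x + \<theta>))"

definition sample_mean :: "nat \<Rightarrow> (nat \<Rightarrow> real^'s) \<Rightarrow> real^'s" where
  "sample_mean n x = (1 / real n) *\<^sub>R (\<Sum>i<n. x i)"

definition residuals :: "nat \<Rightarrow> (nat \<Rightarrow> real^'s) \<Rightarrow> (nat \<Rightarrow> real^'s)" where
  "residuals n x = (\<lambda>i\<in>{..<n}. x i - sample_mean n x)"

definition residual_algebra :: "(real^'s) measure \<Rightarrow> nat \<Rightarrow> (nat \<Rightarrow> real^'s) measure" where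
  "residual_algebra F n =
     vimage_algebra (space (sample_meas F 0 n)) (residuals n) (PiM {..<n} (\<lambda>_. borel))"

definition pitman :: "(real^'s) measure \<Rightarrow> nat \<Rightarrow> (nat \<Rightarrow> real^'s) \<Rightarrow> real^'s" where
  "pitman F n x = sample_mean n x -
     (\<chi> j. real_cond_exp (sample_meas F 0 n) (residual_algebra F n) (\<lambda>y. sample_mean n y $ j) x)"

definition cov_matrix :: "'a measure \<Rightarrow> ('a \<Rightarrow> real^'s) \<Rightarrow> real^'s^'s" where
  "cov_matrix M t = (\<chi> i j. 
      integral\<^sup>L M (\<lambda>x. (t x $ i - integral\<^sup>L M (\<lambda>y. t y $ i)) * (t x $ j - integral\<^sup>L M (\<lambda>y. t y $ j))))"

definition pitman_cov :: "(real^'s) measure \<Rightarrow> real^'s \<Rightarrow> nat \<Rightarrow> real^'s^'s" where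
  "pitman_cov F \<theta> n = cov_matrix (sample_meas F \<theta> n) (pitman F n)"

definition nonneg_definite :: "real^'s^'s \<Rightarrow> bool" where
  "nonneg_definite A \<longleftrightarrow> (\<forall>u. 0 \<le> u \<bullet> (A *v u))"

end

theory Submission
  imports Defs
begin

text \<open>
  By translation equivariance the covariance does not depend on \<open>\<theta>\<close>, so one samples under
  \<open>\<theta> = 0\<close>, and the quadratic form \<open>u \<bullet> V\<^sub>n u\<close> is the variance of \<open>u \<bullet> t\<^sub>n\<close> for the
  Pitman estimator \<open>t\<^sub>n\<close>. As \<open>t\<^sub>n\<close> is the sample mean minus its conditional expectation given
  the residuals, i.e. minus an \<open>L\<^sup>2\<close>-projection, \<open>u \<bullet> t\<^sub>n\<^sub>+\<^sub>1\<close> has the least variance among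
  all \<open>u \<bullet> (sample mean) - H\<close> with \<open>H\<close> a function of the residuals of the \<open>n + 1\<close> observations.
  The average of the \<open>n + 1\<close> leave-one-out estimators \<open>u \<bullet> t\<^sub>n\<close> is of this form: the sample
  mean of a leave-one-out subsample, and its residuals, differ from those of the full sample
  by functions of the full residuals. The variance drop lemma of Artstein, Ball, Barthe and
  Naor, a consequence of the Efron--Stein inequality, bounds the variance of that average by
  \<open>n / (n + 1)\<close> times the variance of \<open>u \<bullet> t\<^sub>n\<close>.
\<close>

definition square_integrable :: "'a measure \<Rightarrow> ('a \<Rightarrow> real) \<Rightarrow> bool" where
  "square_integrable M f \<longleftrightarrow> f \<in> borel_measurable M \<and> integrable M (\<lambda>x. (f x)\<^sup>2)"

lemma square_integrable_measurable: "square_integrable M f \<Longrightarrow> f \<in> borel_measurable M"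
  by (simp add: square_integrable_def)

lemma square_integrable_square: "square_integrable M f \<Longrightarrow> integrable M (\<lambda>x. (f x)\<^sup>2)"
  by (simp add: square_integrable_def)

lemma integrable_mult_square_integrable:
  fixes f g :: "'a \<Rightarrow> real"
  assumes "square_integrable M f" "square_integrable M g"
  shows "integrable M (\<lambda>x. f x * g x)"
proof (rule Bochner_Integration.integrable_bound[of _ "\<lambda>x. (f x)\<^sup>2 + (g x)\<^sup>2"])
  show "integrable M (\<lambda>x. (f x)\<^sup>2 + (g x)\<^sup>2)" using assms by (simp add: square_integrable_def)
  show "(\<lambda>x. f x * g x) \<in> borel_measurable M"
    using assms by (auto simp: square_integrable_def)
  have "2 * \<bar>f x * g x\<bar> \<le> (f x)\<^sup>2 + (g x)\<^sup>2" for x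
    using sum_squares_bound[of "\<bar>f x\<bar>" "\<bar>g x\<bar>"] by (simp add: abs_mult power2_abs)
  then show "AE x in M. norm (f x * g x) \<le> norm ((f x)\<^sup>2 + (g x)\<^sup>2)"
    by (intro AE_I2) (smt (verit) real_norm_def zero_le_power2)
qed

lemma square_integrable_add:
  fixes f g :: "'a \<Rightarrow> real"
  assumes "square_integrable M f" "square_integrable M g"
  shows "square_integrable M (\<lambda>x. f x + g x)"
proof -
  have "integrable M (\<lambda>x. (f x)\<^sup>2 + 2 * (f x * g x) + (g x)\<^sup>2)"
    using assms integrable_mult_square_integrable[OF assms] by (simp add: square_integrable_def)
  then show ?thesis
    using assms by (auto simp: square_integrable_def power2_sum ac_simps)
qed

lemma square_integrable_cmult: "square_integrable M f \<Longrightarrow> square_integrable M (\<lambda>x. c * f x)"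
  by (auto simp: square_integrable_def power_mult_distrib)

lemma square_integrable_diff:
  "square_integrable M f \<Longrightarrow> square_integrable M g \<Longrightarrow> square_integrable M (\<lambda>x. f x - g x)"
  using square_integrable_add[of M f "\<lambda>x. - g x"] by (simp add: square_integrable_def)

lemma square_integrable_const: "finite_measure M \<Longrightarrow> square_integrable M (\<lambda>x. c)"
  by (simp add: square_integrable_def finite_measure.integrable_const)

lemma square_integrable_sum:
  "finite_measure M \<Longrightarrow> (\<And>i. i \<in> I \<Longrightarrow> square_integrable M (f i))
    \<Longrightarrow> square_integrable M (\<lambda>x. \<Sum>i\<in>I. f i x)"
  by (induction I rule: infinite_finite_induct) (simp_all add: square_integrable_const square_integrable_add)

lemma square_integrable_imp_integrable: "finite_measure M \<Longrightarrow> square_integrable M f \<Longrightarrow> integrable M f"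
  by (rule finite_measure.square_integrable_imp_integrable) (simp_all add: square_integrable_def)

lemma square_integrable_inner:
  fixes t :: "'a \<Rightarrow> real^'s"
  assumes "finite_measure M" "\<And>j. square_integrable M (\<lambda>x. t x $ j)"
  shows "square_integrable M (\<lambda>x. u \<bullet> t x)"
  unfolding inner_vec_def inner_real_def by (intro square_integrable_sum square_integrable_cmult assms)

lemma integral_square_add:
  fixes f g :: "'a \<Rightarrow> real"
  assumes "square_integrable M f" "square_integrable M g"
  shows "(\<integral>x. (f x + g x)\<^sup>2 \<partial>M) = (\<integral>x. (f x)\<^sup>2 \<partial>M) + 2 * (\<integral>x. f x * g x \<partial>M) + (\<integral>x. (g x)\<^sup>2 \<partial>M)"
proof -
  have "(\<integral>x. (f x + g x)\<^sup>2 \<partial>M) = (\<integral>x. (f x)\<^sup>2 + 2 * (f x * g x) + (g x)\<^sup>2 \<partial>M)"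
    by (simp add: power2_sum ac_simps)
  also have "\<dots> = (\<integral>x. (f x)\<^sup>2 \<partial>M) + (\<integral>x. 2 * (f x * g x) \<partial>M) + (\<integral>x. (g x)\<^sup>2 \<partial>M)"
    using assms integrable_mult_square_integrable[OF assms] by (simp add: square_integrable_def)
  finally show ?thesis by simp
qed

lemma integral_square_sum:
  fixes h :: "'i \<Rightarrow> 'a \<Rightarrow> real"
  assumes "\<And>i. i \<in> I \<Longrightarrow> square_integrable M (h i)"
  shows "(\<integral>x. (\<Sum>i\<in>I. h i x)\<^sup>2 \<partial>M) = (\<Sum>i\<in>I. \<Sum>j\<in>I. \<integral>x. h i x * h j x \<partial>M)"
proof -
  have int: "integrable M (\<lambda>x. h i x * h j x)" if "i \<in> I" "j \<in> I" for i j
    using integrable_mult_square_integrable assms that by blast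
  have "(\<integral>x. (\<Sum>i\<in>I. h i x)\<^sup>2 \<partial>M) = (\<integral>x. (\<Sum>i\<in>I. \<Sum>j\<in>I. h i x * h j x) \<partial>M)"
    by (simp add: power2_eq_square sum_product)
  also have "\<dots> = (\<Sum>i\<in>I. \<integral>x. (\<Sum>j\<in>I. h i x * h j x) \<partial>M)"
    using int by (intro Bochner_Integration.integral_sum Bochner_Integration.integrable_sum) auto
  also have "\<dots> = (\<Sum>i\<in>I. \<Sum>j\<in>I. \<integral>x. h i x * h j x \<partial>M)"
    using int by (intro sum.cong refl Bochner_Integration.integral_sum) auto
  finally show ?thesis .
qed

lemma square_integral_le_integral_square:
  fixes h :: "'a \<Rightarrow> real"
  assumes "prob_space M" "integrable M h" "integrable M (\<lambda>x. (h x)\<^sup>2)"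
  shows "(\<integral>x. h x \<partial>M)\<^sup>2 \<le> (\<integral>x. (h x)\<^sup>2 \<partial>M)"
  using prob_space.variance_eq[OF assms] prob_space.variance_positive[OF assms(1), of h] by simp

lemma variance_cong_AE:
  fixes f g :: "'a \<Rightarrow> real"
  assumes "f \<in> borel_measurable M" "g \<in> borel_measurable M" "AE x in M. f x = g x"
  shows "prob_space.variance M f = prob_space.variance M g"
proof -
  have "(\<integral>x. f x \<partial>M) = (\<integral>x. g x \<partial>M)" by (rule integral_cong_AE[OF assms])
  then show ?thesis
    using assms by (intro integral_cong_AE) (auto elim: AE_mp)
qed

section \<open>Integrating out one coordinate of an i.i.d.\ sample\<close>

definition ignores_coord :: "nat \<Rightarrow> ((nat \<Rightarrow> 'a) \<Rightarrow> real) \<Rightarrow> bool" where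
  "ignores_coord j f \<longleftrightarrow> (\<forall>x y. f (x(j := y)) = f x)"

locale iid_sample =
  fixes P :: "'a measure" and m :: nat
  assumes prob_space_P: "prob_space P"
begin

abbreviation "\<Omega> \<equiv> PiM {..<m} (\<lambda>_. P)"

lemma prob_space_\<Omega>: "prob_space \<Omega>"
  by (simp add: prob_space_PiM prob_space_P)

lemma finite_measure_\<Omega>: "finite_measure \<Omega>"
  by (rule prob_space.finite_measure[OF prob_space_\<Omega>])

lemma pair_prob_space_\<Omega>_P: "pair_prob_space \<Omega> P"
  by (simp add: pair_prob_space_def pair_sigma_finite_def prob_space_\<Omega> prob_space_P
      prob_space_imp_sigma_finite)

lemma measurable_resample:
  "j < m \<Longrightarrow> (\<lambda>z. (fst z)(j := snd z)) \<in> measurable (\<Omega> \<Otimes>\<^sub>M P) \<Omega>"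
  by (rule measurable_fun_upd[where J="{..<m}"]) auto

lemma distr_resample:
  assumes j: "j < m"
  shows "distr (\<Omega> \<Otimes>\<^sub>M P) \<Omega> (\<lambda>z. (fst z)(j := snd z)) = \<Omega>"
proof (rule product_sigma_finite.PiM_eqI)
  interpret PP: product_prob_space "\<lambda>_. P" by (simp add: prob_space_P product_prob_spaceI)
  show "product_sigma_finite (\<lambda>_. P)" by unfold_locales
  show "finite {..<m}" by simp
  show "sets (distr (\<Omega> \<Otimes>\<^sub>M P) \<Omega> (\<lambda>z. (fst z)(j := snd z))) = sets \<Omega>" by simp
  fix A assume A: "\<And>i. i \<in> {..<m} \<Longrightarrow> A i \<in> sets P"
  define B where "B i = (if i = j then space P else A i)" for i
  have B: "\<And>i. i \<in> {..<m} \<Longrightarrow> B i \<in> sets P" using A by (auto simp: B_def)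
  have "(\<lambda>z. (fst z)(j := snd z)) -` Pi\<^sub>E {..<m} A \<inter> space (\<Omega> \<Otimes>\<^sub>M P) = Pi\<^sub>E {..<m} B \<times> A j"
    unfolding B_def space_pair_measure space_PiM using j A[THEN sets.sets_into_space]
    by (auto simp: PiE_iff extensional_def split: if_splits; fastforce)
  then have "emeasure (distr (\<Omega> \<Otimes>\<^sub>M P) \<Omega> (\<lambda>z. (fst z)(j := snd z))) (Pi\<^sub>E {..<m} A)
      = emeasure (\<Omega> \<Otimes>\<^sub>M P) (Pi\<^sub>E {..<m} B \<times> A j)"
    using A by (simp add: emeasure_distr measurable_resample[OF j] sets_PiM_I_finite)
  also have "\<dots> = emeasure \<Omega> (Pi\<^sub>E {..<m} B) * emeasure P (A j)"
    using B A j by (intro sigma_finite_measure.emeasure_pair_measure_Times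
        prob_space_imp_sigma_finite prob_space_P) (auto intro: sets_PiM_I_finite)
  also have "\<dots> = (\<Prod>i<m. emeasure P (B i)) * emeasure P (A j)"
    using B by (subst PP.emeasure_PiM) auto
  also have "\<dots> = (\<Prod>i<m. emeasure P (A i))"
  proof -
    have "(\<Prod>i\<in>{..<m}-{j}. emeasure P (B i)) = (\<Prod>i\<in>{..<m}-{j}. emeasure P (A i))"
      by (auto simp: B_def intro!: prod.cong)
    then show ?thesis
      using j by (simp add: prod.remove B_def prob_space.emeasure_space_1[OF prob_space_P] mult.commute)
  qed
  finally show "emeasure (distr (\<Omega> \<Otimes>\<^sub>M P) \<Omega> (\<lambda>z. (fst z)(j := snd z))) (Pi\<^sub>E {..<m} A)
      = (\<Prod>i<m. emeasure P (A i))" .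
qed

lemma integrable_resample:
  fixes f :: "(nat \<Rightarrow> 'a) \<Rightarrow> real"
  assumes "j < m" "integrable \<Omega> f"
  shows "integrable (\<Omega> \<Otimes>\<^sub>M P) (\<lambda>z. f ((fst z)(j := snd z)))"
  using assms integrable_distr_eq[OF measurable_resample[OF assms(1)] borel_measurable_integrable[OF assms(2)]]
  by (simp add: distr_resample)

lemma integral_resample:
  fixes f :: "(nat \<Rightarrow> 'a) \<Rightarrow> real"
  assumes "j < m" "f \<in> borel_measurable \<Omega>"
  shows "(\<integral>z. f ((fst z)(j := snd z)) \<partial>(\<Omega> \<Otimes>\<^sub>M P)) = (\<integral>x. f x \<partial>\<Omega>)"
  using integral_distr[OF measurable_resample assms(2), symmetric] assms(1) by (simp add: distr_resample)

definition integrate_out :: "nat \<Rightarrow> ((nat \<Rightarrow> 'a) \<Rightarrow> real) \<Rightarrow> (nat \<Rightarrow> 'a) \<Rightarrow> real" where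
  "integrate_out j f x = (\<integral>y. f (x(j := y)) \<partial>P)"

lemma measurable_integrate_out:
  assumes "j < m" "f \<in> borel_measurable \<Omega>"
  shows "integrate_out j f \<in> borel_measurable \<Omega>"
proof -
  have "case_prod (\<lambda>x y. f (x(j := y))) = (\<lambda>z. f ((fst z)(j := snd z)))"
    by (rule ext) (simp add: split_beta)
  then have "case_prod (\<lambda>x y. f (x(j := y))) \<in> borel_measurable (\<Omega> \<Otimes>\<^sub>M P)"
    using measurable_compose[OF measurable_resample assms(2)] assms(1) by simp
  then show ?thesis
    unfolding integrate_out_def[abs_def]
    by (rule sigma_finite_measure.borel_measurable_lebesgue_integral[OF
          prob_space_imp_sigma_finite[OF prob_space_P]])
qed

lemma
  fixes f :: "(nat \<Rightarrow> 'a) \<Rightarrow> real"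
  assumes "j < m" "integrable \<Omega> f"
  shows integrable_integrate_out: "integrable \<Omega> (integrate_out j f)"
    and integral_integrate_out: "(\<integral>x. integrate_out j f x \<partial>\<Omega>) = (\<integral>x. f x \<partial>\<Omega>)"
proof -
  interpret pair_prob_space \<Omega> P by (rule pair_prob_space_\<Omega>_P)
  have "integrable (\<Omega> \<Otimes>\<^sub>M P) (\<lambda>z. f ((fst z)(j := snd z)))"
    by (rule integrable_resample[OF assms])
  from integrable_fst'[OF this] integral_fst'[OF this]
  show "integrable \<Omega> (integrate_out j f)" "(\<integral>x. integrate_out j f x \<partial>\<Omega>) = (\<integral>x. f x \<partial>\<Omega>)"
    using integral_resample[OF assms(1) borel_measurable_integrable[OF assms(2)]]
    by (simp_all add: integrate_out_def[abs_def])
qed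

lemma AE_integrable_slice:
  fixes f :: "(nat \<Rightarrow> 'a) \<Rightarrow> real"
  assumes "j < m" "integrable \<Omega> f"
  shows "AE x in \<Omega>. integrable P (\<lambda>y. f (x(j := y)))"
proof -
  interpret pair_prob_space \<Omega> P by (rule pair_prob_space_\<Omega>_P)
  show ?thesis using AE_integrable_fst'[OF integrable_resample[OF assms]] by simp
qed

lemma AE_integrate_out_diff:
  assumes "j < m" "integrable \<Omega> f" "integrable \<Omega> g"
  shows "AE x in \<Omega>. integrate_out j (\<lambda>x. f x - g x) x = integrate_out j f x - integrate_out j g x"
  using AE_integrable_slice[OF assms(1,2)] AE_integrable_slice[OF assms(1,3)]
  by eventually_elim (simp add: integrate_out_def)

text \<open>Conditional Jensen for the square, with \<open>integrate_out j\<close> in the role of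
  conditional expectation given all coordinates but the \<open>j\<close>-th.\<close>

lemma
  assumes j: "j < m" and f: "square_integrable \<Omega> f"
  shows square_integrable_integrate_out: "square_integrable \<Omega> (integrate_out j f)"
    and integral_square_integrate_out_le:
      "(\<integral>x. (integrate_out j f x)\<^sup>2 \<partial>\<Omega>) \<le> (\<integral>x. (f x)\<^sup>2 \<partial>\<Omega>)"
proof -
  have fi: "integrable \<Omega> f"
    by (rule square_integrable_imp_integrable[OF finite_measure_\<Omega> f])
  have f2: "integrable \<Omega> (\<lambda>x. (f x)\<^sup>2)" using f by (simp add: square_integrable_def)
  have meas: "integrate_out j f \<in> borel_measurable \<Omega>"
    using measurable_integrate_out[OF j] f by (simp add: square_integrable_def)
  have ae: "AE x in \<Omega>. (integrate_out j f x)\<^sup>2 \<le> integrate_out j (\<lambda>x. (f x)\<^sup>2) x"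
    using AE_integrable_slice[OF j fi] AE_integrable_slice[OF j f2]
    by eventually_elim (auto simp: integrate_out_def intro: square_integral_le_integral_square[OF prob_space_P])
  have i2: "integrable \<Omega> (integrate_out j (\<lambda>x. (f x)\<^sup>2))" by (rule integrable_integrate_out[OF j f2])
  have sq: "integrable \<Omega> (\<lambda>x. (integrate_out j f x)\<^sup>2)"
    by (rule Bochner_Integration.integrable_bound[OF i2]) (use meas ae in \<open>auto elim: AE_mp\<close>)
  then show "square_integrable \<Omega> (integrate_out j f)" using meas by (simp add: square_integrable_def)
  have "(\<integral>x. (integrate_out j f x)\<^sup>2 \<partial>\<Omega>) \<le> (\<integral>x. integrate_out j (\<lambda>x. (f x)\<^sup>2) x \<partial>\<Omega>)"
    by (rule integral_mono_AE[OF sq i2 ae])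
  also have "\<dots> = (\<integral>x. (f x)\<^sup>2 \<partial>\<Omega>)" by (rule integral_integrate_out[OF j f2])
  finally show "(\<integral>x. (integrate_out j f x)\<^sup>2 \<partial>\<Omega>) \<le> (\<integral>x. (f x)\<^sup>2 \<partial>\<Omega>)" .
qed

lemma ignores_coord_integrate_out: "ignores_coord j (integrate_out j f)"
  unfolding integrate_out_def ignores_coord_def by simp

lemma ignores_coord_integrate_out_other:
  "k \<noteq> j \<Longrightarrow> ignores_coord k f \<Longrightarrow> ignores_coord k (integrate_out j f)"
  unfolding integrate_out_def ignores_coord_def by (simp add: fun_upd_twist)

lemma integral_integrate_out_mult:
  assumes j: "j < m" and f: "square_integrable \<Omega> f" and h: "square_integrable \<Omega> h"
    and "ignores_coord j h"
  shows "(\<integral>x. integrate_out j f x * h x \<partial>\<Omega>) = (\<integral>x. f x * h x \<partial>\<Omega>)"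
proof -
  have "(\<integral>x. f x * h x \<partial>\<Omega>) = (\<integral>x. integrate_out j (\<lambda>x. f x * h x) x \<partial>\<Omega>)"
    using integral_integrate_out[OF j integrable_mult_square_integrable[OF f h]] by simp
  also have "\<dots> = (\<integral>x. integrate_out j f x * h x \<partial>\<Omega>)"
    using assms(4) by (simp add: integrate_out_def ignores_coord_def)
  finally show ?thesis by simp
qed

lemma integral_mult_eq_integrate_out_mult:
  assumes "i < m" "j < m" "i \<noteq> j" and f: "square_integrable \<Omega> f" and g: "square_integrable \<Omega> g"
    and "ignores_coord i f" "ignores_coord j g"
  shows "(\<integral>x. f x * g x \<partial>\<Omega>) = (\<integral>x. integrate_out j f x * integrate_out i g x \<partial>\<Omega>)"
proof -
  have "(\<integral>x. f x * g x \<partial>\<Omega>) = (\<integral>x. integrate_out i g x * f x \<partial>\<Omega>)"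
    using integral_integrate_out_mult[OF assms(1) g f assms(6)] by (simp add: mult.commute)
  also have "\<dots> = (\<integral>x. integrate_out j f x * integrate_out i g x \<partial>\<Omega>)"
    using assms by (subst mult.commute, intro integral_integrate_out_mult[symmetric]
        square_integrable_integrate_out ignores_coord_integrate_out_other) auto
  finally show ?thesis .
qed

definition integrate_out_list :: "nat list \<Rightarrow> ((nat \<Rightarrow> 'a) \<Rightarrow> real) \<Rightarrow> (nat \<Rightarrow> 'a) \<Rightarrow> real" where
  "integrate_out_list ks f = foldl (\<lambda>g k. integrate_out k g) f ks"

lemma integrate_out_list_Nil [simp]: "integrate_out_list [] f = f"
  by (simp add: integrate_out_list_def)

lemma integrate_out_list_Cons [simp]:
  "integrate_out_list (k # ks) f = integrate_out_list ks (integrate_out k f)"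
  by (simp add: integrate_out_list_def)

lemma integral_integrate_out_list:
  assumes "set ks \<subseteq> {..<m}" "square_integrable \<Omega> f"
  shows "(\<integral>x. integrate_out_list ks f x \<partial>\<Omega>) = (\<integral>x. f x \<partial>\<Omega>)"
  using assms
proof (induction ks arbitrary: f)
  case (Cons k ks)
  then show ?case
    by (simp add: square_integrable_integrate_out integral_integrate_out
        square_integrable_imp_integrable[OF finite_measure_\<Omega>])
qed simp

lemma ignores_coord_integrate_out_list:
  "(\<And>j. j \<notin> set ks \<Longrightarrow> ignores_coord j f) \<Longrightarrow> ignores_coord j (integrate_out_list ks f)"
proof (induction ks arbitrary: f)
  case (Cons k ks)
  have "ignores_coord i (integrate_out k f)" if "i \<notin> set ks" for i
    using Cons.prems that
    by (cases "i = k") (auto intro: ignores_coord_integrate_out ignores_coord_integrate_out_other)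
  then show ?case using Cons.IH by simp
qed simp

lemma ignores_all_coords_const:
  assumes "\<And>k. ignores_coord k h" "x \<in> extensional {..<m}"
  shows "h x = h (\<lambda>_. undefined)"
proof -
  have "h (\<lambda>k. if k < N then x k else undefined) = h (\<lambda>_. undefined)" for N
  proof (induction N)
    case (Suc N)
    have "(\<lambda>k. if k < Suc N then x k else undefined) = (\<lambda>k. if k < N then x k else undefined)(N := x N)"
      by (rule ext) auto
    then show ?case using assms(1)[of N] Suc by (simp add: ignores_coord_def)
  qed simp
  moreover have "(\<lambda>k. if k < m then x k else undefined) = x"
    using assms(2) by (auto simp: extensional_def)
  ultimately show ?thesis by metis
qed

lemma integral_square_integrate_out_split:
  assumes k: "k < m" and f: "square_integrable \<Omega> f"
  shows "(\<integral>x. (f x)\<^sup>2 \<partial>\<Omega>)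
    = (\<integral>x. (integrate_out k f x)\<^sup>2 \<partial>\<Omega>) + (\<integral>x. (f x - integrate_out k f x)\<^sup>2 \<partial>\<Omega>)"
proof -
  define g where "g = integrate_out k f"
  have g: "square_integrable \<Omega> g" unfolding g_def by (rule square_integrable_integrate_out[OF k f])
  have d: "square_integrable \<Omega> (\<lambda>x. f x - g x)" by (rule square_integrable_diff[OF f g])
  have "(\<integral>x. g x * g x \<partial>\<Omega>) = (\<integral>x. f x * g x \<partial>\<Omega>)"
    unfolding g_def by (rule integral_integrate_out_mult[OF k f g[unfolded g_def] ignores_coord_integrate_out])
  then have "(\<integral>x. g x * (f x - g x) \<partial>\<Omega>) = 0"
    using integrable_mult_square_integrable[OF f g] integrable_mult_square_integrable[OF g g]
    by (simp add: right_diff_distrib mult.commute)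
  then show ?thesis
    using integral_square_add[OF g d] by (simp add: g_def)
qed

lemma integral_square_integrate_out_le_other:
  assumes j: "j < m" and k: "k < m" "j \<noteq> k" and f: "square_integrable \<Omega> f"
  shows "(\<integral>x. (integrate_out j f x)\<^sup>2 \<partial>\<Omega>)
    \<le> (\<integral>x. (integrate_out j (integrate_out k f) x)\<^sup>2 \<partial>\<Omega>) + (\<integral>x. (f x - integrate_out k f x)\<^sup>2 \<partial>\<Omega>)"
proof -
  define g where "g = integrate_out k f"
  define d where "d x = f x - g x" for x
  have g: "square_integrable \<Omega> g" unfolding g_def by (rule square_integrable_integrate_out[OF k(1) f])
  have d: "square_integrable \<Omega> d" unfolding d_def by (rule square_integrable_diff[OF f g])
  have Eg: "square_integrable \<Omega> (integrate_out j g)" by (rule square_integrable_integrate_out[OF j g])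
  have Ed: "square_integrable \<Omega> (integrate_out j d)" by (rule square_integrable_integrate_out[OF j d])
  have ae: "AE x in \<Omega>. integrate_out j f x = integrate_out j g x + integrate_out j d x"
    using AE_integrate_out_diff[OF j square_integrable_imp_integrable[OF finite_measure_\<Omega> f]
        square_integrable_imp_integrable[OF finite_measure_\<Omega> g]]
    by eventually_elim (simp add: d_def[abs_def])
  txt \<open>\<open>integrate_out j g\<close> ignores coordinate \<open>k\<close>, so it is orthogonal to \<open>d = f - integrate_out k f\<close>;
    it ignores coordinate \<open>j\<close>, so pairing it with \<open>integrate_out j d\<close> is pairing it with \<open>d\<close>.\<close>
  have orth: "(\<integral>x. integrate_out j g x * integrate_out j d x \<partial>\<Omega>) = 0"
  proof -
    have gk: "ignores_coord k (integrate_out j g)"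
      unfolding g_def using k by (intro ignores_coord_integrate_out_other ignores_coord_integrate_out) auto
    have "(\<integral>x. integrate_out j d x * integrate_out j g x \<partial>\<Omega>) = (\<integral>x. d x * integrate_out j g x \<partial>\<Omega>)"
      by (rule integral_integrate_out_mult[OF j d Eg ignores_coord_integrate_out])
    also have "\<dots> = (\<integral>x. f x * integrate_out j g x \<partial>\<Omega>) - (\<integral>x. g x * integrate_out j g x \<partial>\<Omega>)"
      using integrable_mult_square_integrable[OF f Eg] integrable_mult_square_integrable[OF g Eg]
      by (simp add: d_def left_diff_distrib)
    also have "(\<integral>x. g x * integrate_out j g x \<partial>\<Omega>) = (\<integral>x. f x * integrate_out j g x \<partial>\<Omega>)"
      unfolding g_def by (rule integral_integrate_out_mult[OF k(1) f Eg[unfolded g_def] gk[unfolded g_def]])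
    finally show ?thesis by (simp add: mult.commute)
  qed
  have "(\<integral>x. (integrate_out j f x)\<^sup>2 \<partial>\<Omega>) = (\<integral>x. (integrate_out j g x + integrate_out j d x)\<^sup>2 \<partial>\<Omega>)"
    using ae Eg Ed square_integrable_integrate_out[OF j f]
    by (intro integral_cong_AE) (auto simp: square_integrable_def elim: AE_mp)
  also have "\<dots> = (\<integral>x. (integrate_out j g x)\<^sup>2 \<partial>\<Omega>) + (\<integral>x. (integrate_out j d x)\<^sup>2 \<partial>\<Omega>)"
    using integral_square_add[OF Eg Ed] orth by simp
  also have "(\<integral>x. (integrate_out j d x)\<^sup>2 \<partial>\<Omega>) \<le> (\<integral>x. (d x)\<^sup>2 \<partial>\<Omega>)"
    by (rule integral_square_integrate_out_le[OF j d])
  finally show ?thesis by (simp add: g_def d_def)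
qed

lemma sum_integral_square_integrate_out_le_fold:
  assumes "distinct ks" "set ks \<subseteq> {..<m}" "square_integrable \<Omega> f"
  shows "(\<Sum>j\<in>set ks. \<integral>x. (integrate_out j f x)\<^sup>2 \<partial>\<Omega>)
    \<le> (real (length ks) - 1) * (\<integral>x. (f x)\<^sup>2 \<partial>\<Omega>) + (\<integral>x. (integrate_out_list ks f x)\<^sup>2 \<partial>\<Omega>)"
  using assms
proof (induction ks arbitrary: f)
  case (Cons k ks)
  have k: "k < m" "k \<notin> set ks" and ks: "distinct ks" "set ks \<subseteq> {..<m}" using Cons.prems by auto
  define g where "g = integrate_out k f"
  define D where "D = (\<integral>x. (f x - g x)\<^sup>2 \<partial>\<Omega>)"
  have g: "square_integrable \<Omega> g" unfolding g_def by (rule square_integrable_integrate_out[OF k(1) Cons.prems(3)])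
  have "(\<Sum>j\<in>set (k # ks). \<integral>x. (integrate_out j f x)\<^sup>2 \<partial>\<Omega>)
      = (\<integral>x. (g x)\<^sup>2 \<partial>\<Omega>) + (\<Sum>j\<in>set ks. \<integral>x. (integrate_out j f x)\<^sup>2 \<partial>\<Omega>)"
    using k by (simp add: g_def)
  also have "\<dots> \<le> (\<integral>x. (g x)\<^sup>2 \<partial>\<Omega>) + (\<Sum>j\<in>set ks. (\<integral>x. (integrate_out j g x)\<^sup>2 \<partial>\<Omega>) + D)"
    using k ks Cons.prems(3) unfolding g_def D_def
    by (intro add_left_mono sum_mono integral_square_integrate_out_le_other) auto
  also have "\<dots> = (\<integral>x. (g x)\<^sup>2 \<partial>\<Omega>) + (\<Sum>j\<in>set ks. \<integral>x. (integrate_out j g x)\<^sup>2 \<partial>\<Omega>) + real (length ks) * D"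
    using ks by (simp add: sum.distrib distinct_card)
  also have "\<dots> \<le> (\<integral>x. (g x)\<^sup>2 \<partial>\<Omega>) + ((real (length ks) - 1) * (\<integral>x. (g x)\<^sup>2 \<partial>\<Omega>)
      + (\<integral>x. (integrate_out_list ks g x)\<^sup>2 \<partial>\<Omega>)) + real (length ks) * D"
    using Cons.IH[OF ks g] by simp
  also have "\<dots> = (real (length (k # ks)) - 1) * (\<integral>x. (f x)\<^sup>2 \<partial>\<Omega>)
      + (\<integral>x. (integrate_out_list (k # ks) f x)\<^sup>2 \<partial>\<Omega>)"
    using integral_square_integrate_out_split[OF k(1) Cons.prems(3)]
    by (simp add: g_def D_def algebra_simps)
  finally show ?case .
qed simp

text \<open>A dual form of the Efron--Stein inequality: the final term is the square of the
  mean because integrating out every coordinate a function depends on leaves a constant.\<close>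

lemma sum_integral_square_integrate_out_le:
  assumes K: "K \<subseteq> {..<m}" and f: "square_integrable \<Omega> f"
    and ign: "\<And>j. j \<notin> K \<Longrightarrow> ignores_coord j f"
  shows "(\<Sum>j\<in>K. \<integral>x. (integrate_out j f x)\<^sup>2 \<partial>\<Omega>)
    \<le> (real (card K) - 1) * (\<integral>x. (f x)\<^sup>2 \<partial>\<Omega>) + (\<integral>x. f x \<partial>\<Omega>)\<^sup>2"
proof -
  have finK: "finite K" using K finite_nat_iff_bounded by blast
  define ks where "ks = sorted_list_of_set K"
  have ks: "distinct ks" "set ks = K" "length ks = card K"
    using finK by (simp_all add: ks_def)
  define c where "c = integrate_out_list ks f (\<lambda>_. undefined)"
  have const: "integrate_out_list ks f x = c" if "x \<in> space \<Omega>" for x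
  proof -
    have "\<And>k. ignores_coord k (integrate_out_list ks f)"
      using ign ks(2) by (intro ignores_coord_integrate_out_list) auto
    moreover have "x \<in> extensional {..<m}" using that by (simp add: space_PiM PiE_iff)
    ultimately show ?thesis unfolding c_def by (rule ignores_all_coords_const)
  qed
  have "(\<integral>x. integrate_out_list ks f x \<partial>\<Omega>) = c"
    using const prob_space.prob_space[OF prob_space_\<Omega>]
    by (simp add: Bochner_Integration.integral_cong[OF refl const])
  then have "c = (\<integral>x. f x \<partial>\<Omega>)"
    using integral_integrate_out_list[of ks f] K ks f by simp
  moreover have "(\<integral>x. (integrate_out_list ks f x)\<^sup>2 \<partial>\<Omega>) = c\<^sup>2"
    using prob_space.prob_space[OF prob_space_\<Omega>]
    by (simp add: Bochner_Integration.integral_cong[OF refl, of _ _ "\<lambda>_. c\<^sup>2"] const)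
  ultimately show ?thesis
    using sum_integral_square_integrate_out_le_fold[OF ks(1) _ f] K ks by simp
qed

lemma integral_mult_le_integral_square_integrate_out:
  assumes "i < m" "j < m" "i \<noteq> j" and hi: "square_integrable \<Omega> (h i)" and hj: "square_integrable \<Omega> (h j)"
    and "ignores_coord i (h i)" "ignores_coord j (h j)"
  shows "(\<integral>x. h i x * h j x \<partial>\<Omega>)
    \<le> ((\<integral>x. (integrate_out j (h i) x)\<^sup>2 \<partial>\<Omega>) + (\<integral>x. (integrate_out i (h j) x)\<^sup>2 \<partial>\<Omega>)) / 2"
proof -
  have a: "square_integrable \<Omega> (integrate_out j (h i))"
    using assms by (intro square_integrable_integrate_out)
  have b: "square_integrable \<Omega> (integrate_out i (h j))"
    using assms by (intro square_integrable_integrate_out)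
  have "(\<integral>x. h i x * h j x \<partial>\<Omega>) = (\<integral>x. integrate_out j (h i) x * integrate_out i (h j) x \<partial>\<Omega>)"
    by (rule integral_mult_eq_integrate_out_mult[OF assms])
  also have "\<dots> \<le> (\<integral>x. ((integrate_out j (h i) x)\<^sup>2 + (integrate_out i (h j) x)\<^sup>2) / 2 \<partial>\<Omega>)"
    using integrable_mult_square_integrable[OF a b] a b
      sum_squares_bound[of "integrate_out j (h i) x" "integrate_out i (h j) x" for x]
    by (intro integral_mono) (auto simp: square_integrable_def mult_ac)
  also have "\<dots> = ((\<integral>x. (integrate_out j (h i) x)\<^sup>2 \<partial>\<Omega>) + (\<integral>x. (integrate_out i (h j) x)\<^sup>2 \<partial>\<Omega>)) / 2"
    using a b by (simp add: square_integrable_def)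
  finally show ?thesis .
qed

end

lemma sum_off_diagonal_swap:
  fixes a :: "nat \<Rightarrow> nat \<Rightarrow> 'b::comm_monoid_add"
  shows "(\<Sum>i<m. \<Sum>j\<in>{..<m}-{i}. a j i) = (\<Sum>i<m. \<Sum>j\<in>{..<m}-{i}. a i j)"
proof -
  have "(\<Sum>i<m. \<Sum>j\<in>{..<m}-{i}. a j i) = (\<Sum>(i, j)\<in>{(i, j). i < m \<and> j < m \<and> j \<noteq> i}. a j i)"
    by (subst sum.Sigma) (auto intro!: sum.cong simp: Sigma_def)
  also have "\<dots> = (\<Sum>(i, j)\<in>{(i, j). i < m \<and> j < m \<and> j \<noteq> i}. a i j)"
    by (rule sum.reindex_bij_witness[where i="\<lambda>(i, j). (j, i)" and j="\<lambda>(i, j). (j, i)"]) auto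
  also have "\<dots> = (\<Sum>i<m. \<Sum>j\<in>{..<m}-{i}. a i j)"
    by (subst sum.Sigma) (auto intro!: sum.cong simp: Sigma_def)
  finally show ?thesis .
qed

lemma (in iid_sample) variance_drop:
  fixes h :: "nat \<Rightarrow> (nat \<Rightarrow> 'a) \<Rightarrow> real"
  assumes m: "2 \<le> m"
    and sq: "\<And>i. i < m \<Longrightarrow> square_integrable \<Omega> (h i)"
    and mean: "\<And>i. i < m \<Longrightarrow> (\<integral>x. h i x \<partial>\<Omega>) = 0"
    and ign: "\<And>i j. i < m \<Longrightarrow> j = i \<or> m \<le> j \<Longrightarrow> ignores_coord j (h i)"
  shows "(\<integral>x. (\<Sum>i<m. h i x)\<^sup>2 \<partial>\<Omega>) \<le> real (m - 1) * (\<Sum>i<m. \<integral>x. (h i x)\<^sup>2 \<partial>\<Omega>)"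
proof -
  define a where "a i j = (\<integral>x. (integrate_out j (h i) x)\<^sup>2 \<partial>\<Omega>)" for i j
  define b where "b i j = (\<integral>x. h i x * h j x \<partial>\<Omega>)" for i j
  have off_diag: "(\<Sum>j\<in>{..<m}-{i}. a i j) \<le> (real m - 2) * b i i" if i: "i < m" for i
  proof -
    have "(\<Sum>j\<in>{..<m}-{i}. a i j)
        \<le> (real (card ({..<m}-{i})) - 1) * (\<integral>x. (h i x)\<^sup>2 \<partial>\<Omega>) + (\<integral>x. h i x \<partial>\<Omega>)\<^sup>2"
      unfolding a_def using i sq ign
      by (intro sum_integral_square_integrate_out_le) (auto simp: not_less)
    then show ?thesis
      using i m mean by (simp add: b_def power2_eq_square of_nat_diff)
  qed
  have "(\<integral>x. (\<Sum>i<m. h i x)\<^sup>2 \<partial>\<Omega>) = (\<Sum>i<m. \<Sum>j<m. b i j)"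
    unfolding b_def using sq by (intro integral_square_sum) auto
  also have "\<dots> = (\<Sum>i<m. b i i + (\<Sum>j\<in>{..<m}-{i}. b i j))"
    by (intro sum.cong refl) (simp add: sum.remove)
  also have "\<dots> \<le> (\<Sum>i<m. b i i + (\<Sum>j\<in>{..<m}-{i}. (a i j + a j i) / 2))"
    unfolding a_def b_def using sq ign
    by (intro sum_mono add_left_mono integral_mult_le_integral_square_integrate_out) auto
  also have "\<dots> = (\<Sum>i<m. b i i)
      + ((\<Sum>i<m. \<Sum>j\<in>{..<m}-{i}. a i j) + (\<Sum>i<m. \<Sum>j\<in>{..<m}-{i}. a j i)) / 2"
    by (simp add: sum.distrib sum_divide_distrib add_divide_distrib)
  also have "\<dots> = (\<Sum>i<m. b i i) + (\<Sum>i<m. \<Sum>j\<in>{..<m}-{i}. a i j)"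
    using sum_off_diagonal_swap[of a m] by simp
  also have "\<dots> \<le> (\<Sum>i<m. b i i) + (\<Sum>i<m. (real m - 2) * b i i)"
    using off_diag by (intro add_left_mono sum_mono) auto
  also have "\<dots> = (\<Sum>i<m. b i i) + (real m - 2) * (\<Sum>i<m. b i i)"
    by (simp add: sum_distrib_left)
  also have "\<dots> = real (m - 1) * (\<Sum>i<m. \<integral>x. (h i x)\<^sup>2 \<partial>\<Omega>)"
    using m by (simp add: b_def power2_eq_square of_nat_diff algebra_simps)
  finally show ?thesis .
qed

section \<open>Leave-one-out subsamples\<close>

definition skip_index :: "nat \<Rightarrow> nat \<Rightarrow> nat" where
  "skip_index i k = (if k < i then k else Suc k)"

definition drop_coord :: "nat \<Rightarrow> nat \<Rightarrow> (nat \<Rightarrow> 'b) \<Rightarrow> (nat \<Rightarrow> 'b)" where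
  "drop_coord n i x = (\<lambda>k\<in>{..<n}. x (skip_index i k))"

lemma inj_skip_index: "inj (skip_index i)"
  by (auto simp: inj_def skip_index_def split: if_splits)

lemma skip_index_less: "k < n \<Longrightarrow> skip_index i k < Suc n"
  by (simp add: skip_index_def)

lemma skip_index_neq: "skip_index i k \<noteq> i"
  by (simp add: skip_index_def)

lemma skip_index_image:
  assumes "i < Suc n"
  shows "skip_index i ` {..<n} = {..<Suc n} - {i}"
proof (intro set_eqI iffI)
  fix j assume "j \<in> {..<Suc n} - {i}"
  then show "j \<in> skip_index i ` {..<n}"
    using assms
    by (cases "j < i") (auto simp: skip_index_def image_iff intro: bexI[of _ "j - 1"])
qed (auto simp: skip_index_less skip_index_neq)

lemma drop_coord_fun_upd: "j = i \<or> Suc n \<le> j \<Longrightarrow> drop_coord n i (x(j := y)) = drop_coord n i x"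
  unfolding drop_coord_def using skip_index_neq skip_index_less
  by (intro restrict_ext) (auto, metis not_less)

lemma sum_drop_coord:
  assumes "i < Suc n"
  shows "(\<Sum>k<n. drop_coord n i x k) = (\<Sum>k<Suc n. x k) - (x i :: 'b::ab_group_add)"
proof -
  have "(\<Sum>k<n. drop_coord n i x k) = (\<Sum>k\<in>skip_index i ` {..<n}. x k)"
    by (simp add: drop_coord_def sum.reindex inj_on_subset[OF inj_skip_index])
  also have "\<dots> = (\<Sum>k<Suc n. x k) - x i"
    using assms by (simp add: skip_index_image sum_diff1)
  finally show ?thesis .
qed

lemma measurable_drop_coord:
  "i < Suc n \<Longrightarrow> drop_coord n i \<in> measurable (PiM {..<Suc n} (\<lambda>_. M)) (PiM {..<n} (\<lambda>_. M))"
  unfolding drop_coord_def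
  by (intro measurable_restrict measurable_component_singleton) (auto simp: skip_index_less)

lemma distr_drop_coord:
  assumes "prob_space P" "i < Suc n"
  shows "distr (PiM {..<Suc n} (\<lambda>_. P)) (PiM {..<n} (\<lambda>_. P)) (drop_coord n i) = PiM {..<n} (\<lambda>_. P)"
  unfolding drop_coord_def
  using distr_PiM_reindex[of "{..<Suc n}" "\<lambda>_. P" "skip_index i" "{..<n}"] assms
  by (simp add: inj_on_subset[OF inj_skip_index] skip_index_less Pi_iff)

lemma integral_drop_coord:
  fixes g :: "(nat \<Rightarrow> 'a) \<Rightarrow> real"
  assumes "prob_space P" "i < Suc n" "g \<in> borel_measurable (PiM {..<n} (\<lambda>_. P))"
  shows "(\<integral>x. g (drop_coord n i x) \<partial>PiM {..<Suc n} (\<lambda>_. P)) = (\<integral>y. g y \<partial>PiM {..<n} (\<lambda>_. P))"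
  using integral_distr[OF measurable_drop_coord[OF assms(2)] assms(3)] assms
  by (simp add: distr_drop_coord)

lemma square_integrable_drop_coord:
  assumes "prob_space P" "i < Suc n" "square_integrable (PiM {..<n} (\<lambda>_. P)) g"
  shows "square_integrable (PiM {..<Suc n} (\<lambda>_. P)) (\<lambda>x. g (drop_coord n i x))"
proof -
  have g: "g \<in> borel_measurable (PiM {..<n} (\<lambda>_. P))" by (rule square_integrable_measurable[OF assms(3)])
  have "integrable (distr (PiM {..<Suc n} (\<lambda>_. P)) (PiM {..<n} (\<lambda>_. P)) (drop_coord n i)) (\<lambda>y. (g y)\<^sup>2)"
    using assms square_integrable_square[OF assms(3)] by (simp add: distr_drop_coord)
  then have "integrable (PiM {..<Suc n} (\<lambda>_. P)) (\<lambda>x. (g (drop_coord n i x))\<^sup>2)"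
    by (subst (asm) integrable_distr_eq[OF measurable_drop_coord[OF assms(2)]]) (use g in simp_all)
  then show ?thesis
    using measurable_compose[OF measurable_drop_coord[OF assms(2)] g] by (simp add: square_integrable_def)
qed

lemma integral_square_sum_leave_one_out_le:
  fixes \<psi> :: "(nat \<Rightarrow> 'a) \<Rightarrow> real"
  assumes P: "prob_space P" and n: "1 \<le> n" and \<psi>: "square_integrable (PiM {..<n} (\<lambda>_. P)) \<psi>"
  shows "(\<integral>x. (\<Sum>i<Suc n. \<psi> (drop_coord n i x) - (\<integral>y. \<psi> y \<partial>PiM {..<n} (\<lambda>_. P)))\<^sup>2 \<partial>PiM {..<Suc n} (\<lambda>_. P))
    \<le> real n * real (Suc n) * prob_space.variance (PiM {..<n} (\<lambda>_. P)) \<psi>"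
proof -
  let ?Om = "PiM {..<Suc n} (\<lambda>_. P)" and ?On = "PiM {..<n} (\<lambda>_. P)"
  have Om: "iid_sample P" by (rule iid_sample.intro[OF P])
  have fin_Om: "finite_measure ?Om" by (rule iid_sample.finite_measure_\<Omega>[OF Om])
  have \<psi>m: "\<psi> \<in> borel_measurable ?On" by (rule square_integrable_measurable[OF \<psi>])
  define \<mu> where "\<mu> = (\<integral>y. \<psi> y \<partial>?On)"
  define h where "h i x = \<psi> (drop_coord n i x) - \<mu>" for i x
  have h: "square_integrable ?Om (h i)" if "i < Suc n" for i
    unfolding h_def using that
    by (intro square_integrable_diff square_integrable_drop_coord P \<psi> square_integrable_const fin_Om)
  have mean_h: "(\<integral>x. h i x \<partial>?Om) = 0" if i: "i < Suc n" for i
  proof -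
    have "integrable ?Om (\<lambda>x. \<psi> (drop_coord n i x))"
      by (rule square_integrable_imp_integrable[OF fin_Om square_integrable_drop_coord[OF P i \<psi>]])
    then have "(\<integral>x. h i x \<partial>?Om) = (\<integral>x. \<psi> (drop_coord n i x) \<partial>?Om) - (\<integral>x. \<mu> \<partial>?Om)"
      unfolding h_def by (rule Bochner_Integration.integral_diff[OF _ finite_measure.integrable_const[OF fin_Om]])
    then show ?thesis
      using integral_drop_coord[OF P i \<psi>m] prob_space.prob_space[OF iid_sample.prob_space_\<Omega>[OF Om]]
      by (simp add: \<mu>_def)
  qed
  have ign: "ignores_coord j (h i)" if "j = i \<or> Suc n \<le> j" for i j
    using that by (simp add: ignores_coord_def h_def drop_coord_fun_upd)
  have square_h: "(\<integral>x. (h i x)\<^sup>2 \<partial>?Om) = prob_space.variance ?On \<psi>" if i: "i < Suc n" for i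
    unfolding h_def \<mu>_def using \<psi>m by (intro integral_drop_coord[OF P i]) simp
  have "(\<integral>x. (\<Sum>i<Suc n. h i x)\<^sup>2 \<partial>?Om) \<le> real (Suc n - 1) * (\<Sum>i<Suc n. \<integral>x. (h i x)\<^sup>2 \<partial>?Om)"
    using n h mean_h ign by (intro iid_sample.variance_drop[OF Om]) auto
  also have "\<dots> = real n * real (Suc n) * prob_space.variance ?On \<psi>"
    by (simp add: square_h)
  finally show ?thesis by (simp only: h_def \<mu>_def)
qed

lemma variance_leave_one_out_average_le:
  fixes \<psi> :: "(nat \<Rightarrow> 'a) \<Rightarrow> real"
  assumes P: "prob_space P" and n: "1 \<le> n" and \<psi>: "square_integrable (PiM {..<n} (\<lambda>_. P)) \<psi>"
  shows "prob_space.variance (PiM {..<Suc n} (\<lambda>_. P))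
      (\<lambda>x. (1 / real (Suc n)) * (\<Sum>i<Suc n. \<psi> (drop_coord n i x)))
    \<le> real n / real (Suc n) * prob_space.variance (PiM {..<n} (\<lambda>_. P)) \<psi>"
proof -
  let ?Om = "PiM {..<Suc n} (\<lambda>_. P)" and ?On = "PiM {..<n} (\<lambda>_. P)"
  have fin_Om: "finite_measure ?Om"
    by (rule iid_sample.finite_measure_\<Omega>[OF iid_sample.intro[OF P]])
  define \<mu> where "\<mu> = (\<integral>y. \<psi> y \<partial>?On)"
  define T where "T x = (1 / real (Suc n)) * (\<Sum>i<Suc n. \<psi> (drop_coord n i x))" for x
  have "(\<integral>x. T x \<partial>?Om) = (1 / real (Suc n)) * (\<Sum>i<Suc n. \<integral>x. \<psi> (drop_coord n i x) \<partial>?Om)"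
    unfolding T_def using square_integrable_drop_coord[OF P _ \<psi>]
    by (subst Bochner_Integration.integral_sum[symmetric])
      (auto intro: square_integrable_imp_integrable[OF fin_Om])
  then have mean_T: "(\<integral>x. T x \<partial>?Om) = \<mu>"
    using square_integrable_measurable[OF \<psi>] by (simp add: integral_drop_coord[OF P] \<mu>_def)
  have "T x - \<mu> = (1 / real (Suc n)) * (\<Sum>i<Suc n. \<psi> (drop_coord n i x) - \<mu>)" for x
    by (simp add: T_def sum_subtractf field_simps)
  then have "(T x - \<mu>)\<^sup>2 = (1 / real (Suc n))\<^sup>2 * (\<Sum>i<Suc n. \<psi> (drop_coord n i x) - \<mu>)\<^sup>2" for x
    by (simp only: power_mult_distrib)
  then have "prob_space.variance ?Om T
      = (1 / real (Suc n))\<^sup>2 * (\<integral>x. (\<Sum>i<Suc n. \<psi> (drop_coord n i x) - \<mu>)\<^sup>2 \<partial>?Om)"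
    by (simp only: mean_T integral_mult_right_zero)
  also have "\<dots> \<le> (1 / real (Suc n))\<^sup>2 * (real n * real (Suc n) * prob_space.variance ?On \<psi>)"
    unfolding \<mu>_def
    by (intro mult_left_mono integral_square_sum_leave_one_out_le[OF P n \<psi>]) simp
  also have "\<dots> = real n / real (Suc n) * prob_space.variance ?On \<psi>"
    by (simp only: power2_eq_square) (simp add: divide_simps)
  finally show ?thesis by (simp only: T_def[abs_def])
qed

section \<open>Conditional expectation as an \<open>L\<^sup>2\<close> projection\<close>

context sigma_finite_subalgebra
begin

lemma square_integrable_real_cond_exp:
  assumes "finite_measure M" "square_integrable M f"
  shows "square_integrable M (real_cond_exp M F f)"
proof -
  have "integrable M (\<lambda>x. (\<lambda>x. x\<^sup>2) (real_cond_exp M F f x))"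
  proof (rule integrable_convex_cond_exp[where I=UNIV])
    show "integrable M f" by (rule square_integrable_imp_integrable[OF assms])
    show "integrable M (\<lambda>x. (f x)\<^sup>2)" by (rule square_integrable_square[OF assms(2)])
    show "convex_on UNIV (\<lambda>x::real. x\<^sup>2)" using convex_power2 by simp
  qed auto
  then show ?thesis by (simp add: square_integrable_def)
qed

lemma variance_sub_real_cond_exp_le:
  assumes M: "prob_space M" and X: "square_integrable M X" and H: "square_integrable M H"
    and "H \<in> borel_measurable F"
  shows "prob_space.variance M (\<lambda>x. X x - real_cond_exp M F X x) \<le> prob_space.variance M (\<lambda>x. X x - H x)"
proof -
  have fin: "finite_measure M" using M by (rule prob_space.finite_measure)
  define C where "C = real_cond_exp M F X"
  define c where "c = (\<integral>x. X x - H x \<partial>M)"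
  define Z where "Z x = X x - C x" for x
  define W where "W x = C x - (H x + c)" for x
  have C: "square_integrable M C" unfolding C_def by (rule square_integrable_real_cond_exp[OF fin X])
  have Z: "square_integrable M Z" unfolding Z_def by (rule square_integrable_diff[OF X C])
  have W: "square_integrable M W"
    unfolding W_def by (intro square_integrable_diff square_integrable_add C H square_integrable_const fin)
  have "W \<in> borel_measurable F" unfolding W_def C_def using assms(4) by simp
  then have "(\<integral>x. W x * C x \<partial>M) = (\<integral>x. W x * X x \<partial>M)"
    unfolding C_def using integrable_mult_square_integrable[OF W X] square_integrable_measurable[OF X]
    by (intro real_cond_exp_intg(2))
  then have orth: "(\<integral>x. Z x * W x \<partial>M) = 0"
    using integrable_mult_square_integrable[OF W X] integrable_mult_square_integrable[OF W C]
    by (simp add: Z_def right_diff_distrib mult.commute)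
  have "prob_space.variance M Z \<le> (\<integral>x. (Z x)\<^sup>2 \<partial>M)"
    using prob_space.variance_eq[OF M square_integrable_imp_integrable[OF fin Z] square_integrable_square[OF Z]]
    by simp
  also have "\<dots> \<le> (\<integral>x. (Z x + W x)\<^sup>2 \<partial>M)"
    using integral_square_add[OF Z W] orth by simp
  also have "\<dots> = prob_space.variance M (\<lambda>x. X x - H x)"
    by (simp add: Z_def W_def c_def algebra_simps)
  finally show ?thesis by (simp add: Z_def[abs_def] C_def)
qed

lemma AE_real_cond_exp_inner:
  fixes t :: "'a \<Rightarrow> real^'s"
  assumes fin: "finite_measure M" and t: "\<And>j. square_integrable M (\<lambda>x. t x $ j)"
  shows "AE x in M. real_cond_exp M F (\<lambda>x. u \<bullet> t x) x
    = (\<Sum>j\<in>UNIV. u $ j * real_cond_exp M F (\<lambda>x. t x $ j) x)"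
proof -
  have int: "integrable M (\<lambda>x. t x $ j)" for j by (rule square_integrable_imp_integrable[OF fin t])
  have "AE x in M. real_cond_exp M F (\<lambda>x. \<Sum>j\<in>UNIV. u $ j * t x $ j) x
      = (\<Sum>j\<in>UNIV. real_cond_exp M F (\<lambda>x. u $ j * t x $ j) x)"
    using int by (intro real_cond_exp_sum) auto
  moreover have "AE x in M. \<forall>j\<in>UNIV. real_cond_exp M F (\<lambda>x. u $ j * t x $ j) x
      = u $ j * real_cond_exp M F (\<lambda>x. t x $ j) x"
    using int by (intro eventually_ball_finite) (auto intro: real_cond_exp_cmult)
  ultimately show ?thesis
    by eventually_elim (simp add: inner_vec_def)
qed

end

lemma measurable_vimage_algebra_eq:
  fixes g :: "'a \<Rightarrow> real"
  assumes g: "g \<in> borel_measurable (vimage_algebra X r N)" and r: "r \<in> X \<rightarrow> space N"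
    and "x \<in> X" "y \<in> X" "r x = r y"
  shows "g x = g y"
proof -
  obtain A where A: "g -` {g x} \<inter> X = r -` A \<inter> X"
    using measurable_sets[OF g, of "{g x}"] sets_vimage_algebra2[OF r] by auto
  have "x \<in> r -` A \<inter> X" using A assms(3) by blast
  then have "y \<in> g -` {g x} \<inter> X" using A assms(4,5) by simp
  then show ?thesis by simp
qed

lemma cov_matrix_quadratic_form:
  fixes t :: "'a \<Rightarrow> real^'s"
  assumes fin: "finite_measure M" and t: "\<And>i. square_integrable M (\<lambda>x. t x $ i)"
  shows "u \<bullet> (cov_matrix M t *v u) = (\<integral>x. (u \<bullet> t x - (\<integral>y. u \<bullet> t y \<partial>M))\<^sup>2 \<partial>M)"
proof -
  define d where "d i x = t x $ i - (\<integral>y. t y $ i \<partial>M)" for i x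
  have d: "square_integrable M (d i)" for i
    unfolding d_def by (intro square_integrable_diff t square_integrable_const fin)
  have "(\<integral>y. u \<bullet> t y \<partial>M) = (\<Sum>i\<in>UNIV. u$i * (\<integral>y. t y $ i \<partial>M))"
    unfolding inner_vec_def using square_integrable_imp_integrable[OF fin t]
    by (subst Bochner_Integration.integral_sum) auto
  then have "u \<bullet> t x - (\<integral>y. u \<bullet> t y \<partial>M) = (\<Sum>i\<in>UNIV. u$i * d i x)" for x
    by (simp add: inner_vec_def d_def right_diff_distrib sum_subtractf)
  then have "(\<integral>x. (u \<bullet> t x - (\<integral>y. u \<bullet> t y \<partial>M))\<^sup>2 \<partial>M)
      = (\<Sum>i\<in>UNIV. \<Sum>j\<in>UNIV. \<integral>x. (u$i * d i x) * (u$j * d j x) \<partial>M)"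
    using d by (simp add: integral_square_sum square_integrable_cmult)
  also have "\<dots> = u \<bullet> (cov_matrix M t *v u)"
    by (simp add: inner_vec_def matrix_vector_mult_def cov_matrix_def d_def sum_distrib_left ac_simps)
  finally show ?thesis ..
qed

section \<open>The Pitman estimator\<close>

lemma sample_mean_component: "sample_mean k x $ j = (1 / real k) * (\<Sum>i<k. x i $ j)"
  by (simp add: sample_mean_def sum_component)

lemma measurable_vec_nth: "f \<in> borel_measurable M \<Longrightarrow> (\<lambda>x. (f x :: real^'s) $ j) \<in> borel_measurable M"
  using measurable_compose[OF _ borel_measurable_continuous_onI[OF
        linear_continuous_on[OF bounded_linear_vec_nth]]] by blast

definition drop_residuals :: "nat \<Rightarrow> nat \<Rightarrow> (nat \<Rightarrow> real^'s) \<Rightarrow> (nat \<Rightarrow> real^'s)" where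
  "drop_residuals n i r = (\<lambda>k\<in>{..<n}. r (skip_index i k) + (1 / real n) *\<^sub>R r i)"

lemma sample_mean_drop_coord:
  assumes n: "1 \<le> n" and i: "i < Suc n"
  shows "sample_mean n (drop_coord n i x)
    = sample_mean (Suc n) x - (1 / real n) *\<^sub>R (x i - sample_mean (Suc n) x)"
proof -
  have "sample_mean n (drop_coord n i x) $ j
      = (sample_mean (Suc n) x - (1 / real n) *\<^sub>R (x i - sample_mean (Suc n) x)) $ j" for j
  proof -
    define S where "S = (\<Sum>k<Suc n. x k $ j)"
    have "sample_mean n (drop_coord n i x) $ j = (S - x i $ j) / real n"
      using sum_drop_coord[OF i, of "\<lambda>k. x k $ j"]
      by (simp add: sample_mean_component S_def drop_coord_def)
    also have "\<dots> = S / real (Suc n) - (x i $ j - S / real (Suc n)) / real n"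
      using n by (simp add: divide_simps) (simp add: algebra_simps)
    finally show ?thesis by (simp add: sample_mean_component S_def)
  qed
  then show ?thesis by (simp add: vec_eq_iff)
qed

lemma residuals_drop_coord:
  assumes "1 \<le> n" "i < Suc n"
  shows "residuals n (drop_coord n i x) = drop_residuals n i (residuals (Suc n) x)"
  unfolding residuals_def drop_residuals_def sample_mean_drop_coord[OF assms]
  using assms by (intro restrict_ext) (simp add: drop_coord_def skip_index_less algebra_simps)

lemma measurable_drop_residuals:
  "i < Suc n \<Longrightarrow> drop_residuals n i \<in> measurable (PiM {..<Suc n} (\<lambda>_. borel)) (PiM {..<n} (\<lambda>_. borel))"
  unfolding drop_residuals_def
  by (intro measurable_restrict borel_measurable_add borel_measurable_scaleR borel_measurable_const
      measurable_component_singleton) (auto simp: skip_index_less)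

locale pitman_setting =
  fixes F :: "(real^'s) measure"
  assumes prob_space_F: "prob_space F" and sets_F: "sets F = sets borel"
    and integrable_norm_square_F: "integrable F (\<lambda>x. norm x ^ 2)"
begin

text \<open>\<open>P0\<close> is \<open>F\<close> on the Borel sets; the shift by \<open>0\<close> is kept so that \<open>sample_meas F 0 k\<close>
  is literally the \<open>k\<close>-fold power of \<open>P0\<close>.\<close>

definition P0 :: "(real^'s) measure" where
  "P0 = distr F borel (\<lambda>x. x + 0)"

abbreviation sample0 :: "nat \<Rightarrow> (nat \<Rightarrow> real^'s) measure" where
  "sample0 k \<equiv> PiM {..<k} (\<lambda>_. P0)"

lemma measurable_translate: "(\<lambda>x. x + c) \<in> measurable F borel"
  by (simp add: measurable_cong_sets[OF sets_F refl])

lemma prob_space_P0: "prob_space P0"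
  unfolding P0_def by (rule prob_space.prob_space_distr[OF prob_space_F measurable_translate])

lemma iid_sample_P0: "iid_sample P0"
  by (rule iid_sample.intro[OF prob_space_P0])

lemma sets_P0: "sets P0 = sets borel"
  by (simp add: P0_def)

lemma prob_space_sample0: "prob_space (sample0 k)"
  by (rule iid_sample.prob_space_\<Omega>[OF iid_sample_P0])

lemma finite_measure_sample0: "finite_measure (sample0 k)"
  by (rule iid_sample.finite_measure_\<Omega>[OF iid_sample_P0])

lemma sample_meas_zero: "sample_meas F 0 k = sample0 k"
  by (simp add: sample_meas_def P0_def)

lemma measurable_coord: "i < k \<Longrightarrow> (\<lambda>x. x i) \<in> borel_measurable (sample0 k)"
  using measurable_component_singleton[of i "{..<k}" "\<lambda>_. P0"]
  by (simp add: measurable_cong_sets[OF refl sets_P0])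

lemma square_integrable_coord_component:
  assumes i: "i < k"
  shows "square_integrable (sample0 k) (\<lambda>x. x i $ j)"
proof -
  have "integrable F (\<lambda>x. norm (x + 0) ^ 2)" using integrable_norm_square_F by simp
  then have "integrable P0 (\<lambda>y. norm y ^ 2)"
    unfolding P0_def by (subst integrable_distr_eq[OF measurable_translate]) simp_all
  moreover have "distr (sample0 k) P0 (\<lambda>\<omega>. \<omega> i) = P0"
    by (rule distr_PiM_component) (simp_all add: prob_space_P0 i)
  ultimately have "integrable (sample0 k) (\<lambda>x. norm (x i) ^ 2)"
    using integrable_distr_eq[of "\<lambda>\<omega>. \<omega> i" "sample0 k" P0 "\<lambda>y. norm y ^ 2"] measurable_coord[OF i]
    by (simp add: measurable_cong_sets[OF sets_P0 refl] measurable_cong_sets[OF refl sets_P0])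
  moreover have "(x i $ j)\<^sup>2 \<le> (norm (x i))\<^sup>2" for x :: "nat \<Rightarrow> real^'s"
    using power_mono[OF component_le_norm_cart[of "x i" j] abs_ge_zero, of 2] by simp
  moreover have m: "(\<lambda>x. x i $ j) \<in> borel_measurable (sample0 k)"
    by (rule measurable_vec_nth[OF measurable_coord[OF i]])
  ultimately show ?thesis
    unfolding square_integrable_def
    by (auto intro: Bochner_Integration.integrable_bound[where f="\<lambda>x. norm (x i) ^ 2"])
qed

lemma square_integrable_sample_mean_component: "square_integrable (sample0 k) (\<lambda>x. sample_mean k x $ j)"
  unfolding sample_mean_component
  by (intro square_integrable_cmult square_integrable_sum finite_measure_sample0
      square_integrable_coord_component) auto

lemma measurable_residuals: "residuals k \<in> measurable (sample0 k) (PiM {..<k} (\<lambda>_. borel))"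
  unfolding residuals_def[abs_def] sample_mean_def
  by (intro measurable_restrict borel_measurable_diff borel_measurable_scaleR borel_measurable_const
      borel_measurable_sum measurable_coord) auto

lemma residuals_funcset: "residuals k \<in> X \<rightarrow> space (PiM {..<k} (\<lambda>_. borel))"
  by (auto simp: residuals_def space_PiM)

lemma residual_algebra_eq:
  "residual_algebra F k = vimage_algebra (space (sample0 k)) (residuals k) (PiM {..<k} (\<lambda>_. borel))"
  by (simp add: residual_algebra_def sample_meas_zero)

lemma sigma_finite_subalgebra_residual_algebra:
  "sigma_finite_subalgebra (sample0 k) (residual_algebra F k)"
  by (intro finite_measure_subalgebra_is_sigma_finite)
    (simp add: finite_measure_subalgebra_def finite_measure_subalgebra_axioms_def subalgebra_def
      residual_algebra_eq sets_image_in_sets[OF refl measurable_residuals] finite_measure_sample0)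

lemma pitman_component:
  "pitman F k x $ j = sample_mean k x $ j - real_cond_exp (sample0 k) (residual_algebra F k) (\<lambda>y. sample_mean k y $ j) x"
  by (simp add: pitman_def sample_meas_zero)

lemma square_integrable_pitman_component: "square_integrable (sample0 k) (\<lambda>x. pitman F k x $ j)"
  unfolding pitman_component
  by (intro square_integrable_diff square_integrable_sample_mean_component finite_measure_sample0
      sigma_finite_subalgebra.square_integrable_real_cond_exp[OF sigma_finite_subalgebra_residual_algebra])

lemma pitman_translate:
  assumes k: "1 \<le> k" and x: "x \<in> space (sample0 k)"
  shows "pitman F k (compose {..<k} (\<lambda>v. v + \<theta>) x) = pitman F k x + \<theta>"
proof -
  define y where "y = compose {..<k} (\<lambda>v. v + \<theta>) x"
  have y: "y \<in> space (sample0 k)"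
    using x by (simp add: y_def compose_def space_PiM PiE_iff sets_eq_imp_space_eq[OF sets_P0])
  have "(\<Sum>i<k. y i) = (\<Sum>i<k. x i) + real k *\<^sub>R \<theta>"
    by (simp add: y_def compose_def sum.distrib del: sum_constant add: sum_constant_scaleR)
  then have mean_y: "sample_mean k y = sample_mean k x + \<theta>"
    using k by (simp add: sample_mean_def scaleR_add_right)
  have res_y: "residuals k y = residuals k x"
    unfolding residuals_def mean_y by (intro restrict_ext) (simp add: y_def compose_def)
  have "real_cond_exp (sample0 k) (residual_algebra F k) f y
      = real_cond_exp (sample0 k) (residual_algebra F k) f x" for f
  proof (rule measurable_vimage_algebra_eq[where r="residuals k" and N="PiM {..<k} (\<lambda>_. borel)"])
    show "residuals k \<in> space (sample0 k) \<rightarrow> space (PiM {..<k} (\<lambda>_. borel))"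
      by (rule residuals_funcset)
    show "real_cond_exp (sample0 k) (residual_algebra F k) f
        \<in> borel_measurable (vimage_algebra (space (sample0 k)) (residuals k) (PiM {..<k} (\<lambda>_. borel)))"
      using borel_measurable_cond_exp[of "sample0 k" "residual_algebra F k" f]
      by (simp add: residual_algebra_eq)
  qed (use x y res_y in simp_all)
  then show ?thesis
    unfolding y_def[symmetric] by (simp add: vec_eq_iff pitman_component mean_y)
qed

lemma measurable_translate_sample:
  "compose {..<k} (\<lambda>v. v + \<theta>) \<in> measurable (sample0 k) (sample_meas F \<theta> k)"
  unfolding compose_def[abs_def] sample_meas_def
  by (intro measurable_restrict)
    (simp add: measurable_cong_sets[OF refl sets_distr] measurable_coord borel_measurable_add)

lemma sample_meas_eq_distr_translate:
  "sample_meas F \<theta> k = distr (sample0 k) (sample_meas F \<theta> k) (compose {..<k} (\<lambda>v. v + \<theta>))"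
proof -
  define P\<theta> where "P\<theta> = distr F borel (\<lambda>x. x + \<theta>)"
  have P\<theta>: "prob_space P\<theta>"
    unfolding P\<theta>_def by (rule prob_space.prob_space_distr[OF prob_space_F measurable_translate])
  have "distr P0 P\<theta> (\<lambda>v. v + \<theta>) = distr F P\<theta> ((\<lambda>v. v + \<theta>) \<circ> (\<lambda>x. x + 0))"
    unfolding P0_def
    by (rule distr_distr) (simp_all add: P\<theta>_def measurable_translate measurable_cong_sets[OF sets_F refl])
  also have "\<dots> = P\<theta>" unfolding P\<theta>_def by (rule distr_cong) simp_all
  finally have "distr P0 P\<theta> (\<lambda>v. v + \<theta>) = P\<theta>" .
  moreover have "(\<lambda>v. v + \<theta>) \<in> measurable P0 P\<theta>"
    by (simp add: P\<theta>_def measurable_cong_sets[OF sets_P0 refl])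
  moreover have "distr (sample0 k) (PiM {..<k} (\<lambda>_. P\<theta>)) (compose {..<k} (\<lambda>v. v + \<theta>))
      = PiM {..<k} (\<lambda>i. distr P0 P\<theta> (\<lambda>v. v + \<theta>))"
    using calculation(2) by (intro distr_PiM_finite_prob_space') (simp_all add: prob_space_P0 P\<theta>)
  ultimately show ?thesis by (simp add: sample_meas_def P\<theta>_def)
qed

lemma pitman_cov_translate:
  assumes k: "1 \<le> k"
  shows "pitman_cov F \<theta> k = cov_matrix (sample0 k) (pitman F k)"
proof -
  let ?S = "sample_meas F \<theta> k" and ?T = "compose {..<k} (\<lambda>v. v + \<theta>)"
  define p where "p i x = pitman F k x $ i" for i x
  have p: "square_integrable (sample0 k) (p i)" for i
    unfolding p_def by (rule square_integrable_pitman_component)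
  have sets_S: "sets ?S = sets (sample0 k)"
    unfolding sample_meas_def by (rule sets_PiM_cong) (simp_all add: sets_P0)
  have pm: "p i \<in> borel_measurable ?S" for i
    using square_integrable_measurable[OF p] by (simp add: measurable_cong_sets[OF sets_S refl])
  have shift: "x \<in> space (sample0 k) \<Longrightarrow> p i (?T x) = p i x + \<theta> $ i" for i x
    by (simp add: p_def pitman_translate[OF k])
  have integral_S: "(\<integral>x. g x \<partial>?S) = (\<integral>x. g (?T x) \<partial>sample0 k)" if "g \<in> borel_measurable ?S" for g :: "(nat \<Rightarrow> real^'s) \<Rightarrow> real"
    by (subst sample_meas_eq_distr_translate) (rule integral_distr[OF measurable_translate_sample that])
  have mean: "(\<integral>x. p i x \<partial>?S) = (\<integral>x. p i x \<partial>sample0 k) + \<theta> $ i" for i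
  proof -
    have "(\<integral>x. p i x \<partial>?S) = (\<integral>x. p i x + \<theta> $ i \<partial>sample0 k)"
      using integral_S[OF pm] shift by (simp cong: Bochner_Integration.integral_cong)
    also have "\<dots> = (\<integral>x. p i x \<partial>sample0 k) + (\<integral>x. \<theta> $ i \<partial>sample0 k)"
      by (rule Bochner_Integration.integral_add[OF square_integrable_imp_integrable[OF finite_measure_sample0 p]
            finite_measure.integrable_const[OF finite_measure_sample0]])
    also have "(\<integral>x. \<theta> $ i \<partial>sample0 k) = \<theta> $ i"
      using prob_space.prob_space[OF prob_space_sample0] by simp
    finally show ?thesis .
  qed
  have "cov_matrix ?S (pitman F k) $ i $ j = cov_matrix (sample0 k) (pitman F k) $ i $ j" for i j
  proof -
    have "cov_matrix ?S (pitman F k) $ i $ j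
        = (\<integral>x. (p i x - (\<integral>y. p i y \<partial>?S)) * (p j x - (\<integral>y. p j y \<partial>?S)) \<partial>?S)"
      by (simp add: cov_matrix_def p_def)
    also have "\<dots> = (\<integral>x. (p i (?T x) - (\<integral>y. p i y \<partial>?S)) * (p j (?T x) - (\<integral>y. p j y \<partial>?S)) \<partial>sample0 k)"
      using pm by (intro integral_S) auto
    also have "\<dots> = cov_matrix (sample0 k) (pitman F k) $ i $ j"
      by (simp add: cov_matrix_def p_def[symmetric] shift mean cong: Bochner_Integration.integral_cong)
    finally show ?thesis .
  qed
  then show ?thesis by (simp add: pitman_cov_def vec_eq_iff)
qed

lemma pitman_cov_quadratic_form:
  assumes "1 \<le> k"
  shows "u \<bullet> (pitman_cov F \<theta> k *v u) = prob_space.variance (sample0 k) (\<lambda>x. u \<bullet> pitman F k x)"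
  unfolding pitman_cov_translate[OF assms]
  by (rule cov_matrix_quadratic_form[OF finite_measure_sample0 square_integrable_pitman_component])

lemma variance_inner_pitman:
  "prob_space.variance (sample0 k) (\<lambda>x. u \<bullet> pitman F k x)
    = prob_space.variance (sample0 k) (\<lambda>x. u \<bullet> sample_mean k x
        - real_cond_exp (sample0 k) (residual_algebra F k) (\<lambda>x. u \<bullet> sample_mean k x) x)"
proof -
  interpret S: sigma_finite_subalgebra "sample0 k" "residual_algebra F k"
    by (rule sigma_finite_subalgebra_residual_algebra)
  have mean: "square_integrable (sample0 k) (\<lambda>x. u \<bullet> sample_mean k x)"
    by (rule square_integrable_inner[OF finite_measure_sample0 square_integrable_sample_mean_component])
  show ?thesis
  proof (rule variance_cong_AE)
    show "(\<lambda>x. u \<bullet> pitman F k x) \<in> borel_measurable (sample0 k)"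
      by (intro square_integrable_measurable square_integrable_inner finite_measure_sample0
          square_integrable_pitman_component)
    show "(\<lambda>x. u \<bullet> sample_mean k x - real_cond_exp (sample0 k) (residual_algebra F k)
        (\<lambda>x. u \<bullet> sample_mean k x) x) \<in> borel_measurable (sample0 k)"
      using mean by (intro square_integrable_measurable square_integrable_diff
          S.square_integrable_real_cond_exp finite_measure_sample0)
    show "AE x in sample0 k. u \<bullet> pitman F k x = u \<bullet> sample_mean k x
        - real_cond_exp (sample0 k) (residual_algebra F k) (\<lambda>x. u \<bullet> sample_mean k x) x"
      using S.AE_real_cond_exp_inner[OF finite_measure_sample0 square_integrable_sample_mean_component, of u]
      by eventually_elim (simp add: inner_vec_def pitman_component right_diff_distrib sum_subtractf)
  qed
qed

lemma measurable_drop_coord_residual_algebra: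
  assumes n: "1 \<le> n" and i: "i < Suc n"
  shows "drop_coord n i \<in> measurable (residual_algebra F (Suc n)) (residual_algebra F n)"
proof -
  have res: "residuals (Suc n) \<in> measurable (residual_algebra F (Suc n)) (PiM {..<Suc n} (\<lambda>_. borel))"
    unfolding residual_algebra_eq by (rule measurable_vimage_algebra1[OF residuals_funcset])
  have "drop_coord n i \<in> measurable (residual_algebra F (Suc n))
      (vimage_algebra (space (sample0 n)) (residuals n) (PiM {..<n} (\<lambda>_. borel)))"
  proof (rule measurable_vimage_algebra2)
    show "drop_coord n i \<in> space (residual_algebra F (Suc n)) \<rightarrow> space (sample0 n)"
      using measurable_space[OF measurable_drop_coord[OF i, of P0]] by (simp add: residual_algebra_eq Pi_iff)
    show "(\<lambda>x. residuals n (drop_coord n i x)) \<in> measurable (residual_algebra F (Suc n)) (PiM {..<n} (\<lambda>_. borel))"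
      unfolding residuals_drop_coord[OF n i]
      by (rule measurable_compose[OF res measurable_drop_residuals[OF i]])
  qed
  then show ?thesis by (simp add: residual_algebra_eq)
qed

lemma measurable_residual_algebra_mean_sub_pitman_drop_coord:
  assumes n: "1 \<le> n" and i: "i < Suc n"
  shows "(\<lambda>x. u \<bullet> sample_mean (Suc n) x - u \<bullet> pitman F n (drop_coord n i x))
    \<in> borel_measurable (residual_algebra F (Suc n))"
proof -
  define ce where "ce j = real_cond_exp (sample0 n) (residual_algebra F n) (\<lambda>y. sample_mean n y $ j)" for j
  have "u \<bullet> sample_mean (Suc n) x - u \<bullet> pitman F n (drop_coord n i x)
      = (1 / real n) * (u \<bullet> residuals (Suc n) x i) + (\<Sum>j\<in>UNIV. u $ j * ce j (drop_coord n i x))" for x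
  proof -
    have "u \<bullet> pitman F n (drop_coord n i x)
        = u \<bullet> sample_mean n (drop_coord n i x) - (\<Sum>j\<in>UNIV. u $ j * ce j (drop_coord n i x))"
      by (simp add: inner_vec_def pitman_component ce_def right_diff_distrib sum_subtractf)
    moreover have "residuals (Suc n) x i = x i - sample_mean (Suc n) x"
      using i by (simp add: residuals_def)
    ultimately show ?thesis
      by (simp add: sample_mean_drop_coord[OF n i] inner_diff_right)
  qed
  moreover have "(\<lambda>x. residuals (Suc n) x i) \<in> borel_measurable (residual_algebra F (Suc n))"
    unfolding residual_algebra_eq using i
    by (intro measurable_compose[OF measurable_vimage_algebra1[OF residuals_funcset]
          measurable_component_singleton]) simp
  moreover have "(\<lambda>x. ce j (drop_coord n i x)) \<in> borel_measurable (residual_algebra F (Suc n))" for j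
    unfolding ce_def
    by (rule measurable_compose[OF measurable_drop_coord_residual_algebra[OF n i] borel_measurable_cond_exp])
  ultimately show ?thesis
    by (simp only:) (intro borel_measurable_add borel_measurable_times borel_measurable_const
        borel_measurable_sum borel_measurable_inner)
qed

lemma variance_pitman_Suc_le:
  assumes n: "1 \<le> n"
  shows "real (Suc n) * prob_space.variance (sample0 (Suc n)) (\<lambda>x. u \<bullet> pitman F (Suc n) x)
    \<le> real n * prob_space.variance (sample0 n) (\<lambda>x. u \<bullet> pitman F n x)"
proof -
  interpret S: sigma_finite_subalgebra "sample0 (Suc n)" "residual_algebra F (Suc n)"
    by (rule sigma_finite_subalgebra_residual_algebra)
  define \<psi> where "\<psi> y = u \<bullet> pitman F n y" for y
  define X where "X x = u \<bullet> sample_mean (Suc n) x" for x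
  define T where "T x = (1 / real (Suc n)) * (\<Sum>i<Suc n. \<psi> (drop_coord n i x))" for x
  have \<psi>: "square_integrable (sample0 n) \<psi>"
    unfolding \<psi>_def by (intro square_integrable_inner finite_measure_sample0 square_integrable_pitman_component)
  have X: "square_integrable (sample0 (Suc n)) X"
    unfolding X_def by (intro square_integrable_inner finite_measure_sample0 square_integrable_sample_mean_component)
  have T: "square_integrable (sample0 (Suc n)) T"
    unfolding T_def
    by (intro square_integrable_cmult square_integrable_sum finite_measure_sample0
        square_integrable_drop_coord[OF prob_space_P0 _ \<psi>]) auto
  have "X x - T x = (1 / real (Suc n)) * (\<Sum>i<Suc n. X x - \<psi> (drop_coord n i x))" for x
    by (simp add: T_def sum_subtractf field_simps)
  then have "(\<lambda>x. X x - T x) \<in> borel_measurable (residual_algebra F (Suc n))"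
    using measurable_residual_algebra_mean_sub_pitman_drop_coord[OF n] unfolding X_def \<psi>_def
    by (simp only:) (intro borel_measurable_times borel_measurable_const borel_measurable_sum; simp)
  then have "prob_space.variance (sample0 (Suc n))
      (\<lambda>x. X x - real_cond_exp (sample0 (Suc n)) (residual_algebra F (Suc n)) X x)
      \<le> prob_space.variance (sample0 (Suc n)) (\<lambda>x. X x - (X x - T x))"
    by (intro S.variance_sub_real_cond_exp_le prob_space_sample0 X square_integrable_diff T)
  moreover have "X x - (X x - T x) = T x" for x by simp
  moreover have "prob_space.variance (sample0 (Suc n)) (\<lambda>x. u \<bullet> pitman F (Suc n) x)
      = prob_space.variance (sample0 (Suc n))
          (\<lambda>x. X x - real_cond_exp (sample0 (Suc n)) (residual_algebra F (Suc n)) X x)"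
    unfolding X_def by (rule variance_inner_pitman)
  ultimately have "prob_space.variance (sample0 (Suc n)) (\<lambda>x. u \<bullet> pitman F (Suc n) x)
      \<le> prob_space.variance (sample0 (Suc n)) T"
    by (simp only:)
  also have "\<dots> \<le> real n / real (Suc n) * prob_space.variance (sample0 n) \<psi>"
    unfolding T_def by (rule variance_leave_one_out_average_le[OF prob_space_P0 n \<psi>])
  finally show ?thesis
    by (simp add: \<psi>_def[abs_def] field_simps)
qed

end

theorem mainTheorem13:
  fixes F :: "(real^'s) measure" and \<theta> :: "real^'s" and n :: nat
  assumes "prob_space F"
    and "sets F = sets borel"
    and "integrable F (\<lambda>x. norm x ^ 2)"
    and "n \<ge> 1"
  shows "nonneg_definite (real n *\<^sub>R pitman_cov F \<theta> n - real (n + 1) *\<^sub>R pitman_cov F \<theta> (n + 1))"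
  unfolding nonneg_definite_def
proof
  interpret pitman_setting F by (rule pitman_setting.intro) (rule assms)+
  fix u :: "real^'s"
  have "u \<bullet> ((real n *\<^sub>R pitman_cov F \<theta> n - real (n + 1) *\<^sub>R pitman_cov F \<theta> (n + 1)) *v u)
      = real n * (u \<bullet> (pitman_cov F \<theta> n *v u)) - real (Suc n) * (u \<bullet> (pitman_cov F \<theta> (Suc n) *v u))"
    by (simp add: matrix_vector_mult_diff_rdistrib scaleR_matrix_vector_assoc[symmetric] inner_diff_right)
  also have "\<dots> = real n * prob_space.variance (sample0 n) (\<lambda>x. u \<bullet> pitman F n x)
      - real (Suc n) * prob_space.variance (sample0 (Suc n)) (\<lambda>x. u \<bullet> pitman F (Suc n) x)"
    using assms(4) by (simp only: pitman_cov_quadratic_form le_SucI)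
  finally show "0 \<le> u \<bullet> ((real n *\<^sub>R pitman_cov F \<theta> n - real (n + 1) *\<^sub>R pitman_cov F \<theta> (n + 1)) *v u)"
    using variance_pitman_Suc_le[OF assms(4), of u] by linarith
qed

end
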